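(* With the setup in the context, suppose $Q>2m$ and let $\varphi_1,\varphi_2$ be unit eigenvectors of $H$ for its two largest eigenvalues $\lambda_1>\lambda_2$. If $\varphi_1(v)^2+\varphi_2(v)^2\ge\frac12$, then at time $t=\frac{\pi}{\lambda_1-\lambda_2}$, $$p(t)\ \ge\ \big(2\varphi_1(v)^2+2\varphi_2(v)^2-1\big)^2.$$
   Context: $G$ is a finite, simple, connected graph with vertex set $V$, maximum degree $m$, and an involution $\sigma$ (a bijection $V\to V$ with $\sigma\circ\sigma=\mathrm{id}$ such that $x\sim y$ implies $\sigma(x)\sim\sigma(y)$). Fix $v\in V$ with $v':=\sigma(v)\ne v$, and let $H=A_G+D_Q$ be the adjacency matrix plus the diagonal potential matrix, with potential $Q$ at $v$ and $v'$ and $0$ elsewhere. The transfer probability is $p(t)=|\langle e_v,e^{itH}e_{v'}\rangle|^2$, where $e_x$ is the standard basis vector of vertex $x$. *)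

theory Defs
  imports "HOL-Analysis.Analysis"
begin

definition simple_graph :: "('n \<Rightarrow> 'n \<Rightarrow> bool) \<Rightarrow> bool" where
  "simple_graph E \<longleftrightarrow> (\<forall>x y. E x y \<longrightarrow> E y x) \<and> (\<forall>x. \<not> E x x)"

definition connected_graph :: "('n \<Rightarrow> 'n \<Rightarrow> bool) \<Rightarrow> bool" where
  "connected_graph E \<longleftrightarrow> (\<forall>x y. E\<^sup>*\<^sup>* x y)"

definition degree :: "('n::finite \<Rightarrow> 'n \<Rightarrow> bool) \<Rightarrow> 'n \<Rightarrow> nat" where
  "degree E x = card {y. E x y}"

definition max_degree :: "('n::finite \<Rightarrow> 'n \<Rightarrow> bool) \<Rightarrow> nat" where
  "max_degree E = Max (range (degree E))"

definition graph_involution :: "('n \<Rightarrow> 'n \<Rightarrow> bool) \<Rightarrow> ('n \<Rightarrow> 'n) \<Rightarrow> bool" where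
  "graph_involution E \<sigma> \<longleftrightarrow> bij \<sigma> \<and> (\<forall>x. \<sigma> (\<sigma> x) = x) \<and> (\<forall>x y. E x y \<longrightarrow> E (\<sigma> x) (\<sigma> y))"

definition hamiltonian ::
  "('n::finite \<Rightarrow> 'n \<Rightarrow> bool) \<Rightarrow> ('n \<Rightarrow> 'n) \<Rightarrow> 'n \<Rightarrow> real \<Rightarrow> real^'n^'n" where
  "hamiltonian E \<sigma> v Q =
     (\<chi> i j. (if E i j then 1 else 0) + (if i = j \<and> (i = v \<or> i = \<sigma> v) then Q else 0))"

definition matpow :: "real^'n^'n \<Rightarrow> nat \<Rightarrow> real^'n^'n" where
  "matpow A k = ((\<lambda>B. A ** B) ^^ k) (mat 1)"

definition exp_itH_entry :: "real^'n^'n \<Rightarrow> real \<Rightarrow> 'n \<Rightarrow> 'n \<Rightarrow> complex" where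
  "exp_itH_entry H t x y =
     (\<Sum>k. (\<i> * complex_of_real t) ^ k / of_nat (fact k) * complex_of_real (matpow H k $ x $ y))"

definition transfer_prob :: "real^'n^'n \<Rightarrow> 'n \<Rightarrow> 'n \<Rightarrow> real \<Rightarrow> real" where
  "transfer_prob H v v' t = (cmod (exp_itH_entry H t v v'))\<^sup>2"

definition is_eigenvalue :: "real^'n^'n \<Rightarrow> real \<Rightarrow> bool" where
  "is_eigenvalue H c \<longleftrightarrow> (\<exists>x. x \<noteq> 0 \<and> H *v x = c *\<^sub>R x)"

end

theory Submission
  imports Defs
begin

text \<open>
  Let P be the permutation operator x \<mapsto> x \<circ> \<sigma>. It commutes with H, so the simple top
  eigenvector \<phi>1 has a parity: P \<phi>1 = \<epsilon> \<phi>1 with \<epsilon> = \<plusminus>1. The test vector e_v - \<epsilon> e_v' has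
  Rayleigh quotient at least Q - 1 > m, so H has an eigenvalue \<mu> \<ge> Q - 1 of parity -\<epsilon>; as
  \<mu> \<noteq> \<lambda>1, it is at most \<lambda>2, so \<lambda>2 > m. On vectors vanishing at v and v' the quadratic form
  of H is at most m |w|^2, whereas on the span of eigenvectors for eigenvalues above m it is
  larger. The \<epsilon>-even part \<phi>2 + \<epsilon> P \<phi>2 is a \<lambda>2-eigenvector orthogonal to \<phi>1; if it were
  nonzero, a suitable combination of it with \<phi>1 would vanish at v and v', which is impossible.
  Hence P \<phi>2 = -\<epsilon> \<phi>2.

  Expanding the entry of exp(itH) in an orthonormal eigenbasis, at t = \<pi>/(\<lambda>1 - \<lambda>2) the phases
  of the \<phi>1- and \<phi>2-terms differ by \<pi> while their parities differ by a sign, so together they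
  have modulus a = \<phi>1(v)^2 + \<phi>2(v)^2. By Parseval and AM-GM the other terms have total
  modulus at most 1 - a, whence the entry has modulus at least 2a - 1.
\<close>

lemma symmetric_matrix_inner:
  fixes H :: "real^'n::finite^'n"
  assumes "transpose H = H"
  shows "(H *v x) \<bullet> y = x \<bullet> (H *v y)"
  using dot_lmul_matrix[of x H y] vector_transpose_matrix[of x H] assms by simp

lemma symmetric_eigenvectors_orthogonal:
  fixes H :: "real^'n::finite^'n"
  assumes "transpose H = H" and "H *v x = a *\<^sub>R x" and "H *v y = b *\<^sub>R y" and "a \<noteq> b"
  shows "x \<bullet> y = 0"
proof -
  have "a * (x \<bullet> y) = b * (x \<bullet> y)"
    using symmetric_matrix_inner[OF assms(1), of x y] assms(2,3) by simp
  then show ?thesis using assms(4) by simp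
qed

lemma symmetric_eigenvector_orthogonal_image:
  fixes H :: "real^'n::finite^'n"
  assumes "transpose H = H" and "H *v c = \<mu> *\<^sub>R c" and "c \<bullet> x = 0"
  shows "c \<bullet> (H *v x) = 0"
  using symmetric_matrix_inner[OF assms(1), of c x] assms(2,3) by simp

lemma rayleigh_quotient_attains_max:
  fixes H :: "real^'n::finite^'n"
  assumes S: "subspace S" and "S \<noteq> {0}"
  obtains x where "x \<in> S" and "norm x = 1"
    and "\<And>y. y \<in> S \<Longrightarrow> y \<bullet> (H *v y) \<le> (x \<bullet> (H *v x)) * (norm y)\<^sup>2"
proof -
  let ?f = "\<lambda>y. y \<bullet> (H *v y)"
  let ?K = "sphere 0 1 \<inter> S"
  obtain z where "z \<in> S" "z \<noteq> 0" using assms subspace_0 by blast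
  then have "z /\<^sub>R norm z \<in> ?K" using S by (simp add: subspace_scale)
  moreover have "compact ?K" using closed_subspace[OF S] by (simp add: compact_Int_closed)
  moreover have "continuous_on ?K ?f"
    by (intro continuous_on_inner continuous_on_id matrix_vector_mult_linear_continuous_on)
  ultimately obtain x where x: "x \<in> ?K" and max: "\<And>y. y \<in> ?K \<Longrightarrow> ?f y \<le> ?f x"
    using continuous_attains_sup[of ?K ?f] by blast
  have "?f y \<le> ?f x * (norm y)\<^sup>2" if "y \<in> S" for y
  proof (cases "y = 0")
    case False
    have "y /\<^sub>R norm y \<in> ?K" using that S False by (simp add: subspace_scale)
    then have "?f (y /\<^sub>R norm y) \<le> ?f x" using max by blast
    moreover have "?f (y /\<^sub>R norm y) = ?f y / (norm y)\<^sup>2"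
      by (simp add: matrix_vector_mult_scaleR power2_eq_square divide_inverse)
    ultimately have "?f y / (norm y)\<^sup>2 \<le> ?f x" by simp
    then show ?thesis using False by (simp add: divide_le_eq)
  qed simp
  with x show ?thesis using that by auto
qed

(* If w = Hx - (x.Hx) x were nonzero, the Rayleigh quotient would increase at first order
   along x + t w for small t > 0. *)
lemma rayleigh_maximizer_is_eigenvector:
  fixes H :: "real^'n::finite^'n"
  assumes sym: "transpose H = H" and S: "subspace S" and inv: "\<And>x. x \<in> S \<Longrightarrow> H *v x \<in> S"
    and xS: "x \<in> S" and nx: "norm x = 1"
    and max: "\<And>y. y \<in> S \<Longrightarrow> y \<bullet> (H *v y) \<le> (x \<bullet> (H *v x)) * (norm y)\<^sup>2"
  shows "H *v x = (x \<bullet> (H *v x)) *\<^sub>R x"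
proof -
  let ?f = "\<lambda>y. y \<bullet> (H *v y)"
  define l where "l = ?f x"
  define w where "w = H *v x - l *\<^sub>R x"
  have wS: "w \<in> S" unfolding w_def using inv xS S by (simp add: subspace_diff subspace_scale)
  have xx: "x \<bullet> x = 1" using nx by (simp add: norm_eq_1)
  have xw: "x \<bullet> w = 0" unfolding w_def l_def by (simp add: inner_diff_right xx)
  have wHx: "w \<bullet> (H *v x) = w \<bullet> w"
    using xw by (simp add: w_def inner_diff_left inner_diff_right inner_commute)
  have "w = 0"
  proof (rule ccontr)
    assume "w \<noteq> 0"
    then have ww: "w \<bullet> w > 0" by simp
    define D where "D = l * (w \<bullet> w) - ?f w"
    have D: "D \<ge> 0" using max[OF wS] by (simp add: D_def l_def power2_norm_eq_inner)
    define t where "t = (w \<bullet> w) / (D + 1)"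
    have t: "t > 0" using ww D by (simp add: t_def)
    have "x + t *\<^sub>R w \<in> S" using xS wS S by (simp add: subspace_add subspace_scale)
    from max[OF this] have le: "?f (x + t *\<^sub>R w) \<le> l * ((x + t *\<^sub>R w) \<bullet> (x + t *\<^sub>R w))"
      by (simp add: l_def power2_norm_eq_inner)
    have f: "?f (x + t *\<^sub>R w) = l + 2 * t * (w \<bullet> w) + t * t * ?f w"
      using symmetric_matrix_inner[OF sym, of w x] wHx
      by (simp add: l_def matrix_vector_right_distrib matrix_vector_mult_scaleR inner_add_left
          inner_add_right inner_commute algebra_simps)
    have n: "(x + t *\<^sub>R w) \<bullet> (x + t *\<^sub>R w) = 1 + t * t * (w \<bullet> w)"
      using xx xw by (simp add: inner_add_left inner_add_right inner_commute algebra_simps)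
    have "l + 2 * t * (w \<bullet> w) + t * t * ?f w \<le> l * (1 + t * t * (w \<bullet> w))"
      using le unfolding f n .
    then have "t * (2 * (w \<bullet> w)) \<le> t * (t * D)" by (simp add: D_def algebra_simps)
    then have "2 * (w \<bullet> w) \<le> t * D" using t by simp
    moreover have "t * D < w \<bullet> w"
      using ww D by (simp add: t_def field_simps)
    ultimately show False using ww by linarith
  qed
  then show ?thesis by (simp add: w_def l_def)
qed

definition orthonormal_eigenvectors :: "real^'n^'n \<Rightarrow> (real^'n) set \<Rightarrow> bool" where
  "orthonormal_eigenvectors H B \<longleftrightarrow> finite B \<and> pairwise orthogonal B \<and>
     (\<forall>b\<in>B. norm b = 1 \<and> H *v b = (b \<bullet> (H *v b)) *\<^sub>R b)"

lemma symmetric_invariant_subspace_eigenbasis: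
  fixes H :: "real^'n::finite^'n"
  assumes sym: "transpose H = H"
  shows "subspace S \<Longrightarrow> (\<And>x. x \<in> S \<Longrightarrow> H *v x \<in> S) \<Longrightarrow>
    \<exists>B\<subseteq>S. orthonormal_eigenvectors H B \<and> span B = S"
proof (induction "dim S" arbitrary: S rule: less_induct)
  case less
  show ?case
  proof (cases "S = {0}")
    case True
    then show ?thesis by (intro exI[of _ "{}"]) (auto simp: orthonormal_eigenvectors_def)
  next
    case False
    obtain x where xS: "x \<in> S" and nx: "norm x = 1"
      and max: "\<And>y. y \<in> S \<Longrightarrow> y \<bullet> (H *v y) \<le> (x \<bullet> (H *v x)) * (norm y)\<^sup>2"
      using rayleigh_quotient_attains_max[OF less.prems(1) False] by blast
    have ex: "H *v x = (x \<bullet> (H *v x)) *\<^sub>R x"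
      using rayleigh_maximizer_is_eigenvector[OF sym less.prems xS nx max] .
    define S' where "S' = S \<inter> {y. x \<bullet> y = 0}"
    have sub': "subspace S'" unfolding S'_def
      by (intro subspace_inter less.prems(1)) (auto simp: subspace_def inner_add_right)
    have inv': "H *v y \<in> S'" if "y \<in> S'" for y
      using that less.prems(2) symmetric_eigenvector_orthogonal_image[OF sym ex]
      by (simp add: S'_def)
    have "x \<notin> S'" using nx by (auto simp: S'_def norm_eq_1)
    moreover have "S' \<subseteq> S" by (auto simp: S'_def)
    moreover have sp: "span S' = S'" "span S = S"
      using sub' less.prems(1) by (simp_all add: span_eq_iff)
    ultimately have "span S' \<subset> span S" using xS by (simp only: sp) blast
    then have "dim S' < dim S" by (rule dim_psubset)
    from less.hyps[OF this sub' inv'] obtain B where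
      B: "B \<subseteq> S'" "orthonormal_eigenvectors H B" "span B = S'" by blast
    show ?thesis
    proof (intro exI[of _ "insert x B"] conjI)
      show "insert x B \<subseteq> S" using B(1) xS by (auto simp: S'_def)
      have "orthogonal x b" if "b \<in> B" for b
        using B(1) that by (auto simp: S'_def orthogonal_def)
      then show "orthonormal_eigenvectors H (insert x B)"
        using B(2) nx ex by (simp add: orthonormal_eigenvectors_def pairwise_orthogonal_insert)
      show "span (insert x B) = S"
      proof
        show "span (insert x B) \<subseteq> S"
          using \<open>insert x B \<subseteq> S\<close> less.prems(1) by (simp add: span_minimal)
        show "S \<subseteq> span (insert x B)"
        proof
          fix y assume "y \<in> S"
          then have "y - (x \<bullet> y) *\<^sub>R x \<in> S'" using xS less.prems(1) nx
            by (simp add: S'_def subspace_diff subspace_scale inner_diff_right norm_eq_1)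
          then show "y \<in> span (insert x B)" using B(3) by (auto simp: span_breakdown_eq)
        qed
      qed
    qed
  qed
qed

lemma symmetric_orthonormal_eigenvectors_extend:
  fixes H :: "real^'n::finite^'n"
  assumes sym: "transpose H = H" and C: "orthonormal_eigenvectors H C"
  obtains B where "C \<subseteq> B" and "orthonormal_eigenvectors H B" and "span B = UNIV"
proof -
  define S where "S = {x. \<forall>c\<in>C. c \<bullet> x = 0}"
  have "subspace S" unfolding subspace_def S_def by (auto simp: inner_add_right)
  moreover have "H *v x \<in> S" if "x \<in> S" for x
  proof -
    have "c \<bullet> (H *v x) = 0" if "c \<in> C" for c
    proof (rule symmetric_eigenvector_orthogonal_image[OF sym])
      show "H *v c = (c \<bullet> (H *v c)) *\<^sub>R c"
        using C \<open>c \<in> C\<close> by (simp add: orthonormal_eigenvectors_def)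
      show "c \<bullet> x = 0" using \<open>x \<in> S\<close> \<open>c \<in> C\<close> by (simp add: S_def)
    qed
    then show ?thesis by (simp add: S_def)
  qed
  ultimately obtain B' where B': "B' \<subseteq> S" "orthonormal_eigenvectors H B'" "span B' = S"
    using symmetric_invariant_subspace_eigenbasis[OF sym] by blast
  have cross: "orthogonal c b" "orthogonal b c" if "c \<in> C" "b \<in> B'" for c b
    using B'(1) that by (auto simp: S_def orthogonal_def inner_commute)
  show ?thesis
  proof (rule that[of "C \<union> B'"])
    show "orthonormal_eigenvectors H (C \<union> B')"
      using C B'(2) cross unfolding orthonormal_eigenvectors_def pairwise_def by blast
    have "x \<in> span (C \<union> B')" for x
    proof -
      obtain y z where y: "y \<in> span C" and z: "\<And>w. w \<in> span C \<Longrightarrow> orthogonal z w"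
        and x: "x = y + z"
        using orthogonal_subspace_decomp_exists[of C x] by blast
      have "c \<bullet> z = 0" if "c \<in> C" for c
        using z[OF span_base[OF that]] by (simp add: orthogonal_def inner_commute)
      then have "z \<in> span B'" by (simp add: B'(3) S_def)
      then have "z \<in> span (C \<union> B')" by (meson span_mono sup.cobounded2 subsetD)
      moreover have "y \<in> span (C \<union> B')" using y by (meson span_mono sup.cobounded1 subsetD)
      ultimately show ?thesis by (simp add: x span_add)
    qed
    then show "span (C \<union> B') = UNIV" by auto
  qed simp
qed

lemma orthonormal_basis_sum_sq_component:
  fixes B :: "(real^'n::finite) set"
  assumes "finite B" and "pairwise orthogonal B" and "\<And>b. b \<in> B \<Longrightarrow> norm b = 1"
    and "span B = UNIV"
  shows "(\<Sum>b\<in>B. (b $ i)\<^sup>2) = 1"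
proof -
  let ?e = "axis i 1 :: real^'n"
  have "1 = ?e \<bullet> ?e" by simp
  also have "\<dots> = ?e \<bullet> (\<Sum>b\<in>B. (?e \<bullet> b) *\<^sub>R b)"
    using orthonormal_basis_expand[of B ?e] assms by simp
  also have "\<dots> = (\<Sum>b\<in>B. (b $ i)\<^sup>2)"
    by (simp add: inner_sum_right inner_axis' power2_eq_square)
  finally show ?thesis by simp
qed

lemma orthonormal_basis_sum_abs_component_product:
  fixes B :: "(real^'n::finite) set"
  assumes "finite B" and "pairwise orthogonal B" and "\<And>b. b \<in> B \<Longrightarrow> norm b = 1"
    and "span B = UNIV"
  shows "(\<Sum>b\<in>B. \<bar>b $ i * b $ j\<bar>) \<le> 1"
proof -
  have "(\<Sum>b\<in>B. \<bar>b $ i * b $ j\<bar>) \<le> (\<Sum>b\<in>B. ((b $ i)\<^sup>2 + (b $ j)\<^sup>2) / 2)"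
  proof (rule sum_mono)
    fix b :: "real^'n"
    show "\<bar>b $ i * b $ j\<bar> \<le> ((b $ i)\<^sup>2 + (b $ j)\<^sup>2) / 2"
      using sum_squares_bound[of "\<bar>b $ i\<bar>" "\<bar>b $ j\<bar>"] by (simp add: abs_mult)
  qed
  also have "\<dots> = 1"
    using orthonormal_basis_sum_sq_component[OF assms]
    by (simp add: sum.distrib sum_divide_distrib[symmetric])
  finally show ?thesis .
qed

lemma orthonormal_basis_phase_sum_le:
  fixes B :: "(real^'n::finite) set" and \<theta> :: "real^'n \<Rightarrow> real"
  assumes "finite B" and "pairwise orthogonal B" and "\<And>b. b \<in> B \<Longrightarrow> norm b = 1"
    and "span B = UNIV" and "D \<subseteq> B"
  shows "cmod (\<Sum>b\<in>B - D. complex_of_real (b $ i * b $ j) * exp (\<i> * complex_of_real (\<theta> b)))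
    \<le> 1 - (\<Sum>b\<in>D. \<bar>b $ i * b $ j\<bar>)"
proof -
  have "cmod (\<Sum>b\<in>B - D. complex_of_real (b $ i * b $ j) * exp (\<i> * complex_of_real (\<theta> b)))
      \<le> (\<Sum>b\<in>B - D. \<bar>b $ i * b $ j\<bar>)"
    by (rule order_trans[OF norm_sum]) (simp add: norm_mult abs_mult)
  also have "\<dots> = (\<Sum>b\<in>B. \<bar>b $ i * b $ j\<bar>) - (\<Sum>b\<in>D. \<bar>b $ i * b $ j\<bar>)"
    using sum.subset_diff[OF assms(5,1), of "\<lambda>b. \<bar>b $ i * b $ j\<bar>"] by simp
  also have "\<dots> \<le> 1 - (\<Sum>b\<in>D. \<bar>b $ i * b $ j\<bar>)"
    using orthonormal_basis_sum_abs_component_product[OF assms(1-4)] by simp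
  finally show ?thesis .
qed

lemma matpow_eigenvector:
  assumes "H *v b = c *\<^sub>R b"
  shows "matpow H k *v b = (c ^ k) *\<^sub>R b"
proof (induction k)
  case (Suc k)
  have "matpow H (Suc k) *v b = H *v (matpow H k *v b)"
    by (simp add: matpow_def matrix_vector_mul_assoc)
  with Suc assms show ?case by (simp add: matrix_vector_mult_scaleR)
qed (simp add: matpow_def)

lemma exp_itH_entry_eigenbasis:
  fixes H :: "real^'n::finite^'n"
  assumes B: "orthonormal_eigenvectors H B" and span: "span B = UNIV"
  shows "exp_itH_entry H t x y =
    (\<Sum>b\<in>B. complex_of_real (b $ x * b $ y) * exp (\<i> * complex_of_real (t * (b \<bullet> (H *v b)))))"
proof -
  define \<mu> where "\<mu> b = b \<bullet> (H *v b)" for b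
  have matpow_entry: "matpow H k $ x $ y = (\<Sum>b\<in>B. b $ x * b $ y * \<mu> b ^ k)" for k
  proof -
    have "axis y 1 = (\<Sum>b\<in>B. (b $ y) *\<^sub>R b)"
      using orthonormal_basis_expand[of B "axis y 1"] B span
      by (simp add: orthonormal_eigenvectors_def inner_axis')
    then have "matpow H k *v axis y 1 = (\<Sum>b\<in>B. (b $ y) *\<^sub>R (matpow H k *v b))"
      by (simp add: linear_sum[OF matrix_vector_mul_linear] matrix_vector_mult_scaleR)
    also have "\<dots> = (\<Sum>b\<in>B. (b $ y * \<mu> b ^ k) *\<^sub>R b)"
    proof (rule sum.cong[OF refl])
      fix b assume "b \<in> B"
      then have "H *v b = \<mu> b *\<^sub>R b" using B by (simp add: orthonormal_eigenvectors_def \<mu>_def)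
      then have "matpow H k *v b = \<mu> b ^ k *\<^sub>R b" by (rule matpow_eigenvector)
      then show "(b $ y) *\<^sub>R (matpow H k *v b) = (b $ y * \<mu> b ^ k) *\<^sub>R b" by simp
    qed
    finally have "(matpow H k *v axis y 1) $ x = (\<Sum>b\<in>B. b $ y * \<mu> b ^ k * b $ x)" by simp
    then show ?thesis by (simp add: matrix_vector_mult_basis column_def mult_ac)
  qed
  have "(\<i> * complex_of_real t) ^ k / of_nat (fact k) * complex_of_real (matpow H k $ x $ y)
      = (\<Sum>b\<in>B. complex_of_real (b $ x * b $ y) * ((\<i> * complex_of_real (t * \<mu> b)) ^ k /\<^sub>R fact k))"
    for k
    by (simp add: matpow_entry sum_distrib_left scaleR_conv_of_real divide_inverse
        power_mult_distrib mult_ac)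
  moreover have "(\<lambda>k. \<Sum>b\<in>B. complex_of_real (b $ x * b $ y) * ((\<i> * complex_of_real (t * \<mu> b)) ^ k /\<^sub>R fact k))
      sums (\<Sum>b\<in>B. complex_of_real (b $ x * b $ y) * exp (\<i> * complex_of_real (t * \<mu> b)))"
    by (intro sums_sum sums_mult exp_converges)
  ultimately show ?thesis
    unfolding exp_itH_entry_def \<mu>_def by (simp add: sums_unique[symmetric])
qed

lemma exp_itH_entry_opposite_parity_bound:
  fixes H :: "real^'n::finite^'n"
  assumes sym: "transpose H = H"
    and e1: "H *v \<phi>1 = l1 *\<^sub>R \<phi>1" and n1: "norm \<phi>1 = 1"
    and e2: "H *v \<phi>2 = l2 *\<^sub>R \<phi>2" and n2: "norm \<phi>2 = 1" and "l1 \<noteq> l2"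
    and eps: "\<bar>\<epsilon>\<bar> = 1" and p1: "\<phi>1 $ y = \<epsilon> * \<phi>1 $ x" and p2: "\<phi>2 $ y = - \<epsilon> * \<phi>2 $ x"
  shows "2 * ((\<phi>1 $ x)\<^sup>2 + (\<phi>2 $ x)\<^sup>2) - 1 \<le> cmod (exp_itH_entry H (pi / (l1 - l2)) x y)"
proof -
  define t where "t = pi / (l1 - l2)"
  define a where "a = (\<phi>1 $ x)\<^sup>2 + (\<phi>2 $ x)\<^sup>2"
  define c where "c b = complex_of_real (b $ x * b $ y) * exp (\<i> * complex_of_real (t * (b \<bullet> (H *v b))))"
    for b
  have u1: "\<phi>1 \<bullet> \<phi>1 = 1" and u2: "\<phi>2 \<bullet> \<phi>2 = 1" using n1 n2 by (simp_all add: norm_eq_1)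
  have "\<phi>1 \<bullet> \<phi>2 = 0" using symmetric_eigenvectors_orthogonal[OF sym e1 e2 \<open>l1 \<noteq> l2\<close>] .
  then have ne: "\<phi>1 \<noteq> \<phi>2" using u1 by auto
  have "orthonormal_eigenvectors H {\<phi>1, \<phi>2}"
    using \<open>\<phi>1 \<bullet> \<phi>2 = 0\<close> n1 n2 e1 e2 u1 u2
    by (auto simp: orthonormal_eigenvectors_def pairwise_insert orthogonal_def inner_commute)
  then obtain B where C: "{\<phi>1, \<phi>2} \<subseteq> B" and B: "orthonormal_eigenvectors H B" and span: "span B = UNIV"
    using symmetric_orthonormal_eigenvectors_extend[OF sym] by blast
  have onb: "finite B" "pairwise orthogonal B" "\<And>b. b \<in> B \<Longrightarrow> norm b = 1"
    using B by (auto simp: orthonormal_eigenvectors_def)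
  have entry: "exp_itH_entry H t x y = (c \<phi>1 + c \<phi>2) + (\<Sum>b\<in>B - {\<phi>1, \<phi>2}. c b)"
    using exp_itH_entry_eigenbasis[OF B span, of t x y] sum.subset_diff[OF C onb(1), of c] ne
    by (simp add: c_def)
  have "exp (\<i> * complex_of_real (t * l1)) = - exp (\<i> * complex_of_real (t * l2))"
  proof -
    have "\<i> * complex_of_real (t * l1) = \<i> * complex_of_real (t * l2) + pi * \<i>"
      using \<open>l1 \<noteq> l2\<close> by (simp add: t_def field_simps)
    then show ?thesis by (simp add: exp_add)
  qed
  then have "c \<phi>1 + c \<phi>2 = - complex_of_real (\<epsilon> * a) * exp (\<i> * complex_of_real (t * l2))"
    using u1 u2 by (simp add: c_def e1 e2 p1 p2 a_def power2_eq_square algebra_simps)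
  moreover have "a \<ge> 0" by (simp add: a_def)
  ultimately have top: "cmod (c \<phi>1 + c \<phi>2) = a"
    using eps by (simp add: norm_mult abs_mult del: of_real_mult)
  have rest: "cmod (\<Sum>b\<in>B - {\<phi>1, \<phi>2}. c b) \<le> 1 - a"
    using orthonormal_basis_phase_sum_le[OF onb span C, of x y "\<lambda>b. t * (b \<bullet> (H *v b))"] ne eps
    by (simp add: c_def p1 p2 a_def abs_mult power2_eq_square)
  have "2 * a - 1 \<le> cmod (exp_itH_entry H t x y)"
    using norm_diff_ineq[of "c \<phi>1 + c \<phi>2" "\<Sum>b\<in>B - {\<phi>1, \<phi>2}. c b"] top rest
    by (simp add: entry)
  then show ?thesis by (simp add: t_def a_def)
qed

lemma hamiltonian_symmetric:
  assumes "simple_graph E"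
  shows "transpose (hamiltonian E \<sigma> v Q) = hamiltonian E \<sigma> v Q"
  using assms by (auto simp: transpose_def hamiltonian_def simple_graph_def vec_eq_iff)

lemma degree_le_max_degree: "degree E x \<le> max_degree E"
  unfolding max_degree_def by (rule Max_ge) auto

lemma max_degree_pos:
  fixes E :: "'n::finite \<Rightarrow> 'n \<Rightarrow> bool" and x y :: 'n
  assumes "connected_graph E" and "x \<noteq> y"
  shows "1 \<le> max_degree E"
proof -
  have "E\<^sup>*\<^sup>* x y" using assms(1) by (simp add: connected_graph_def)
  then obtain z where "E x z" using assms(2) by (cases rule: converse_rtranclpE) auto
  then have "1 \<le> degree E x" by (auto simp: degree_def Suc_le_eq card_gt_0_iff)
  then show ?thesis using degree_le_max_degree[of E x] by linarith
qed

lemma sum_adjacency_row: "(\<Sum>j\<in>UNIV. if E i j then 1 else 0) = real (degree E i)"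
  by (simp add: degree_def sum.If_cases)

lemma adjacency_form_le_max_degree:
  fixes E :: "'n::finite \<Rightarrow> 'n \<Rightarrow> bool" and w :: "real^'n"
  assumes sym: "\<And>x y. E x y \<Longrightarrow> E y x"
  shows "(\<Sum>i\<in>UNIV. \<Sum>j\<in>UNIV. (if E i j then 1 else 0) * w $ i * w $ j)
    \<le> real (max_degree E) * (w \<bullet> w)"
proof -
  define e where "e i j = (if E i j then 1 else (0::real))" for i j
  have esym: "e i j = e j i" for i j using sym by (auto simp: e_def)
  have "(\<Sum>i\<in>UNIV. \<Sum>j\<in>UNIV. e i j * w $ i * w $ j)
      \<le> (\<Sum>i\<in>UNIV. \<Sum>j\<in>UNIV. e i j * ((w $ i)\<^sup>2 + (w $ j)\<^sup>2) / 2)"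
  proof (intro sum_mono)
    fix i j
    have "w $ i * w $ j \<le> ((w $ i)\<^sup>2 + (w $ j)\<^sup>2) / 2"
      using sum_squares_bound[of "w $ i" "w $ j"] by simp
    moreover have "e i j \<ge> 0" by (simp add: e_def)
    ultimately show "e i j * w $ i * w $ j \<le> e i j * ((w $ i)\<^sup>2 + (w $ j)\<^sup>2) / 2"
      by (metis mult.assoc mult_left_mono times_divide_eq_right)
  qed
  also have "\<dots> = (\<Sum>i\<in>UNIV. \<Sum>j\<in>UNIV. e i j * (w $ i)\<^sup>2)"
  proof -
    have "(\<Sum>i\<in>UNIV. \<Sum>j\<in>UNIV. e i j * (w $ j)\<^sup>2) = (\<Sum>i\<in>UNIV. \<Sum>j\<in>UNIV. e i j * (w $ i)\<^sup>2)"
      by (subst sum.swap) (simp add: esym)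
    then show ?thesis
      by (simp add: sum.distrib sum_divide_distrib[symmetric] algebra_simps)
  qed
  also have "\<dots> = (\<Sum>i\<in>UNIV. real (degree E i) * (w $ i)\<^sup>2)"
    by (simp add: sum_distrib_right[symmetric] e_def sum_adjacency_row)
  also have "\<dots> \<le> (\<Sum>i\<in>UNIV. real (max_degree E) * (w $ i)\<^sup>2)"
    by (intro sum_mono mult_right_mono) (auto simp: degree_le_max_degree)
  also have "\<dots> = real (max_degree E) * (w \<bullet> w)"
    by (simp add: inner_vec_def sum_distrib_left power2_eq_square)
  finally show ?thesis unfolding e_def .
qed

lemma hamiltonian_form_le_max_degree:
  fixes E :: "'n::finite \<Rightarrow> 'n \<Rightarrow> bool" and w :: "real^'n"
  assumes "simple_graph E" and "w $ v = 0" and "w $ \<sigma> v = 0"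
  shows "w \<bullet> (hamiltonian E \<sigma> v Q *v w) \<le> real (max_degree E) * (w \<bullet> w)"
proof -
  have "w \<bullet> (hamiltonian E \<sigma> v Q *v w)
      = (\<Sum>i\<in>UNIV. \<Sum>j\<in>UNIV. w $ i * (hamiltonian E \<sigma> v Q $ i $ j * w $ j))"
    by (simp add: inner_vec_def matrix_vector_mult_def sum_distrib_left)
  also have "\<dots> = (\<Sum>i\<in>UNIV. \<Sum>j\<in>UNIV. (if E i j then 1 else 0) * w $ i * w $ j)"
    using assms(2,3) by (intro sum.cong refl) (auto simp: hamiltonian_def algebra_simps)
  also have "\<dots> \<le> real (max_degree E) * (w \<bullet> w)"
    using assms(1) by (intro adjacency_form_le_max_degree) (auto simp: simple_graph_def)
  finally show ?thesis .
qed

definition permute_vec :: "('n \<Rightarrow> 'n) \<Rightarrow> real^'n \<Rightarrow> real^'n" where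
  "permute_vec \<sigma> x = (\<chi> i. x $ \<sigma> i)"

lemma permute_vec_nth [simp]: "permute_vec \<sigma> x $ i = x $ \<sigma> i"
  by (simp add: permute_vec_def)

lemma permute_vec_zero [simp]: "permute_vec \<sigma> 0 = 0"
  by (simp add: vec_eq_iff)

lemma permute_vec_add [simp]: "permute_vec \<sigma> (x + y) = permute_vec \<sigma> x + permute_vec \<sigma> y"
  by (simp add: vec_eq_iff)

lemma permute_vec_scaleR [simp]: "permute_vec \<sigma> (c *\<^sub>R x) = c *\<^sub>R permute_vec \<sigma> x"
  by (simp add: vec_eq_iff)

lemma permute_vec_involution:
  assumes "\<And>i. \<sigma> (\<sigma> i) = i"
  shows "permute_vec \<sigma> (permute_vec \<sigma> x) = x"
  by (simp add: vec_eq_iff assms)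

lemma permute_vec_axis:
  assumes "\<And>i. \<sigma> (\<sigma> i) = i"
  shows "permute_vec \<sigma> (axis a 1) = axis (\<sigma> a) 1"
  by (simp add: vec_eq_iff axis_def) (metis assms)

lemma hamiltonian_permute_vec:
  fixes E :: "'n::finite \<Rightarrow> 'n \<Rightarrow> bool"
  assumes "graph_involution E \<sigma>"
  shows "hamiltonian E \<sigma> v Q *v permute_vec \<sigma> x = permute_vec \<sigma> (hamiltonian E \<sigma> v Q *v x)"
proof -
  let ?H = "hamiltonian E \<sigma> v Q"
  have inv: "\<And>i. \<sigma> (\<sigma> i) = i" and "bij \<sigma>" and E: "\<And>i j. E i j \<Longrightarrow> E (\<sigma> i) (\<sigma> j)"
    using assms by (auto simp: graph_involution_def)
  have "E (\<sigma> i) (\<sigma> j) = E i j" for i j by (metis E inv)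
  moreover have "(\<sigma> i = \<sigma> j \<and> (\<sigma> i = v \<or> \<sigma> i = \<sigma> v)) = (i = j \<and> (i = v \<or> i = \<sigma> v))" for i j
    by (metis inv)
  ultimately have H: "?H $ \<sigma> i $ \<sigma> j = ?H $ i $ j" for i j
    by (simp add: hamiltonian_def)
  have "permute_vec \<sigma> (?H *v x) $ i = (?H *v permute_vec \<sigma> x) $ i" for i
  proof -
    have "permute_vec \<sigma> (?H *v x) $ i = (\<Sum>j\<in>UNIV. ?H $ \<sigma> i $ j * x $ j)"
      by (simp add: matrix_vector_mult_def)
    also have "\<dots> = (\<Sum>j\<in>UNIV. ?H $ \<sigma> i $ \<sigma> j * x $ \<sigma> j)"
      using \<open>bij \<sigma>\<close> by (intro sum.reindex_bij_betw[symmetric]) (simp add: bij_def bij_betw_def)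
    also have "\<dots> = (?H *v permute_vec \<sigma> x) $ i"
      by (simp add: H matrix_vector_mult_def)
    finally show ?thesis .
  qed
  then show ?thesis by (simp add: vec_eq_iff)
qed

lemma simple_eigenvector_parity:
  fixes H :: "real^'n::finite^'n"
  assumes inv: "\<And>i. \<sigma> (\<sigma> i) = i" and comm: "\<And>x. H *v permute_vec \<sigma> x = permute_vec \<sigma> (H *v x)"
    and e: "H *v \<phi> = l *\<^sub>R \<phi>" and "\<phi> \<noteq> 0" and simple: "\<And>x. H *v x = l *\<^sub>R x \<Longrightarrow> \<exists>c. x = c *\<^sub>R \<phi>"
  obtains \<epsilon> where "\<epsilon> = 1 \<or> \<epsilon> = -1" and "permute_vec \<sigma> \<phi> = \<epsilon> *\<^sub>R \<phi>"
proof -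
  have "H *v permute_vec \<sigma> \<phi> = l *\<^sub>R permute_vec \<sigma> \<phi>" using comm e by simp
  then obtain \<epsilon> where \<epsilon>: "permute_vec \<sigma> \<phi> = \<epsilon> *\<^sub>R \<phi>" using simple by blast
  have "1 *\<^sub>R \<phi> = (\<epsilon> * \<epsilon>) *\<^sub>R \<phi>" using permute_vec_involution[OF inv, of \<phi>] by (simp add: \<epsilon>)
  then have "\<epsilon> * \<epsilon> = 1" using \<open>\<phi> \<noteq> 0\<close> by (metis scaleR_cancel_right)
  then show ?thesis using that \<epsilon> square_eq_1_iff by blast
qed

lemma hamiltonian_form_axis_pair:
  fixes E :: "'n::finite \<Rightarrow> 'n \<Rightarrow> bool"
  assumes "simple_graph E" and "\<sigma> v \<noteq> v" and s: "s = 1 \<or> s = -1"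
  defines "x \<equiv> axis v 1 + s *\<^sub>R axis (\<sigma> v) 1"
  shows "(Q - 1) * (norm x)\<^sup>2 \<le> x \<bullet> (hamiltonian E \<sigma> v Q *v x)"
proof -
  have entry: "axis i 1 \<bullet> (hamiltonian E \<sigma> v Q *v axis j 1)
      = (if E i j then 1 else 0) + (if i = j \<and> (i = v \<or> i = \<sigma> v) then Q else 0)" for i j
    by (simp add: inner_axis' matrix_vector_mult_basis column_def hamiltonian_def)
  have "E (\<sigma> v) v = E v (\<sigma> v)" and "\<not> E v v" and "\<not> E (\<sigma> v) (\<sigma> v)"
    using assms(1) by (auto simp: simple_graph_def)
  then have "x \<bullet> (hamiltonian E \<sigma> v Q *v x) = 2 * Q + 2 * s * (if E v (\<sigma> v) then 1 else 0)"
    using s assms(2)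
    by (auto simp: x_def matrix_vector_right_distrib matrix_vector_mult_scaleR inner_add_left
        inner_add_right entry)
  moreover have "(norm x)\<^sup>2 = 2"
    using s assms(2)
    by (auto simp: power2_norm_eq_inner x_def inner_add_left inner_add_right inner_axis_axis)
  ultimately show ?thesis using s by (auto split: if_splits)
qed

lemma hamiltonian_parity_eigenvector_ge:
  fixes E :: "'n::finite \<Rightarrow> 'n \<Rightarrow> bool"
  assumes "simple_graph E" and "graph_involution E \<sigma>" and "\<sigma> v \<noteq> v" and s: "s = 1 \<or> s = -1"
  obtains z \<mu> where "z \<noteq> 0" and "hamiltonian E \<sigma> v Q *v z = \<mu> *\<^sub>R z"
    and "permute_vec \<sigma> z = s *\<^sub>R z" and "Q - 1 \<le> \<mu>"
proof -
  let ?H = "hamiltonian E \<sigma> v Q"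
  have inv: "\<And>i. \<sigma> (\<sigma> i) = i" using assms(2) by (simp add: graph_involution_def)
  define S where "S = {x. permute_vec \<sigma> x = s *\<^sub>R x}"
  have S: "subspace S" unfolding subspace_def S_def by (auto simp: scaleR_add_right)
  have inv_S: "?H *v x \<in> S" if "x \<in> S" for x
    using that hamiltonian_permute_vec[OF assms(2), of v Q x, symmetric]
    by (simp add: S_def matrix_vector_mult_scaleR)
  define x0 :: "real^'n" where "x0 = axis v 1 + s *\<^sub>R axis (\<sigma> v) 1"
  have "x0 \<in> S"
    using s by (auto simp: S_def x0_def permute_vec_axis[OF inv] inv algebra_simps)
  moreover have "x0 $ v = 1" using assms(3) by (simp add: x0_def axis_def)
  then have "x0 \<noteq> 0" by auto
  ultimately have "S \<noteq> {0}" by blast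
  then obtain z where zS: "z \<in> S" and nz: "norm z = 1"
    and max: "\<And>y. y \<in> S \<Longrightarrow> y \<bullet> (?H *v y) \<le> (z \<bullet> (?H *v z)) * (norm y)\<^sup>2"
    using rayleigh_quotient_attains_max[OF S] by blast
  define \<mu> where "\<mu> = z \<bullet> (?H *v z)"
  have "?H *v z = \<mu> *\<^sub>R z"
    using rayleigh_maximizer_is_eigenvector[OF hamiltonian_symmetric[OF assms(1)] S inv_S zS nz max]
    by (simp add: \<mu>_def)
  have "(Q - 1) * (norm x0)\<^sup>2 \<le> \<mu> * (norm x0)\<^sup>2"
    using hamiltonian_form_axis_pair[of E \<sigma> v s Q] assms(1,3) s max[OF \<open>x0 \<in> S\<close>]
    by (simp add: x0_def \<mu>_def)
  then have "Q - 1 \<le> \<mu>" using \<open>x0 \<noteq> 0\<close> by simp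
  moreover have "z \<noteq> 0" using nz by auto
  ultimately show ?thesis
    using that \<open>?H *v z = \<mu> *\<^sub>R z\<close> zS by (simp add: S_def)
qed

lemma second_eigenvalue_gt_max_degree:
  fixes E :: "'n::finite \<Rightarrow> 'n \<Rightarrow> bool" and \<sigma> :: "'n \<Rightarrow> 'n" and v :: 'n and Q :: real
  defines "H \<equiv> hamiltonian E \<sigma> v Q"
  assumes "simple_graph E" and "connected_graph E" and "graph_involution E \<sigma>" and "\<sigma> v \<noteq> v"
    and "Q > 2 * real (max_degree E)"
    and p1: "permute_vec \<sigma> \<phi>1 = \<epsilon> *\<^sub>R \<phi>1" and \<epsilon>: "\<epsilon> = 1 \<or> \<epsilon> = -1"
    and simple: "\<And>x. H *v x = l1 *\<^sub>R x \<Longrightarrow> \<exists>c. x = c *\<^sub>R \<phi>1"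
    and spectrum: "\<And>\<mu>. is_eigenvalue H \<mu> \<Longrightarrow> \<mu> = l1 \<or> \<mu> \<le> l2"
  shows "real (max_degree E) < l2"
proof -
  obtain z \<mu> where z: "z \<noteq> 0" "H *v z = \<mu> *\<^sub>R z" "permute_vec \<sigma> z = (- \<epsilon>) *\<^sub>R z"
    and "Q - 1 \<le> \<mu>"
    using hamiltonian_parity_eigenvector_ge[OF assms(2,4,5), of "- \<epsilon>" Q] \<epsilon> unfolding H_def by auto
  have "\<mu> \<noteq> l1"
  proof
    assume "\<mu> = l1"
    then obtain c where "z = c *\<^sub>R \<phi>1" using simple z(2) by blast
    then have "\<epsilon> *\<^sub>R z = (- \<epsilon>) *\<^sub>R z" using z(3) p1 by (simp add: mult.commute)
    then have "\<epsilon> = - \<epsilon> \<or> z = 0" by (simp only: scaleR_cancel_right)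
    then show False using z(1) \<epsilon> by auto
  qed
  then have "\<mu> \<le> l2" using spectrum z(1,2) unfolding is_eigenvalue_def by blast
  with \<open>Q - 1 \<le> \<mu>\<close> max_degree_pos[OF assms(3,5)] assms(6) show ?thesis by linarith
qed

lemma eigenvector_combination_form_gt:
  fixes H :: "real^'n::finite^'n"
  assumes "H *v \<phi> = l1 *\<^sub>R \<phi>" and "H *v y = l2 *\<^sub>R y" and "\<phi> \<bullet> y = 0"
    and "m < l1" and "m < l2" and nz: "a *\<^sub>R \<phi> + b *\<^sub>R y \<noteq> 0"
  shows "m * ((a *\<^sub>R \<phi> + b *\<^sub>R y) \<bullet> (a *\<^sub>R \<phi> + b *\<^sub>R y))
    < (a *\<^sub>R \<phi> + b *\<^sub>R y) \<bullet> (H *v (a *\<^sub>R \<phi> + b *\<^sub>R y))"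
proof -
  define p where "p = a * a * (\<phi> \<bullet> \<phi>)"
  define q where "q = b * b * (y \<bullet> y)"
  have ww: "(a *\<^sub>R \<phi> + b *\<^sub>R y) \<bullet> (a *\<^sub>R \<phi> + b *\<^sub>R y) = p + q"
    using assms(3) by (simp add: p_def q_def inner_add_left inner_add_right inner_commute algebra_simps)
  have wHw: "(a *\<^sub>R \<phi> + b *\<^sub>R y) \<bullet> (H *v (a *\<^sub>R \<phi> + b *\<^sub>R y)) = l1 * p + l2 * q"
    using assms(1-3)
    by (simp add: p_def q_def matrix_vector_right_distrib matrix_vector_mult_scaleR inner_add_left
        inner_add_right inner_commute algebra_simps)
  have "p \<ge> 0" "q \<ge> 0" by (simp_all add: p_def q_def)
  moreover have "p + q > 0" using nz ww by (metis inner_gt_zero_iff)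
  ultimately have "0 < (l1 - m) * p + (l2 - m) * q"
    using assms(4,5) by (smt (verit) mult_nonneg_nonneg mult_pos_pos)
  then show ?thesis using ww wHw by (simp add: algebra_simps)
qed

lemma second_eigenvector_parity:
  fixes H :: "real^'n::finite^'n"
  assumes sym: "transpose H = H" and inv: "\<And>i. \<sigma> (\<sigma> i) = i"
    and comm: "\<And>x. H *v permute_vec \<sigma> x = permute_vec \<sigma> (H *v x)"
    and form: "\<And>w. w $ v = 0 \<Longrightarrow> w $ \<sigma> v = 0 \<Longrightarrow> w \<bullet> (H *v w) \<le> m * (w \<bullet> w)"
    and e1: "H *v \<phi>1 = l1 *\<^sub>R \<phi>1" and "\<phi>1 \<noteq> 0"
    and p1: "permute_vec \<sigma> \<phi>1 = \<epsilon> *\<^sub>R \<phi>1" and \<epsilon>: "\<epsilon> = 1 \<or> \<epsilon> = -1"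
    and e2: "H *v \<phi>2 = l2 *\<^sub>R \<phi>2" and "m < l2" and "l2 < l1"
  shows "permute_vec \<sigma> \<phi>2 = (- \<epsilon>) *\<^sub>R \<phi>2"
proof -
  define y where "y = \<phi>2 + \<epsilon> *\<^sub>R permute_vec \<sigma> \<phi>2"
  have ey: "H *v y = l2 *\<^sub>R y"
    using comm e2 by (simp add: y_def matrix_vector_right_distrib matrix_vector_mult_scaleR scaleR_add_right)
  have py: "permute_vec \<sigma> y = \<epsilon> *\<^sub>R y"
    using \<epsilon> by (auto simp: y_def permute_vec_involution[OF inv])
  have "\<phi>1 \<bullet> y = 0"
    using symmetric_eigenvectors_orthogonal[OF sym e1 ey] \<open>l2 < l1\<close> by simp
  have "y = 0"
  proof (rule ccontr)
    assume "y \<noteq> 0"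
    (* ?w vanishes at v by the choice of a, b, and hence at \<sigma> v, as \<phi>1 and y are both
       \<epsilon>-even. *)
    define a where "a = (if \<phi>1 $ v = 0 then 1 else y $ v)"
    define b where "b = (if \<phi>1 $ v = 0 then 0 else - \<phi>1 $ v)"
    let ?w = "a *\<^sub>R \<phi>1 + b *\<^sub>R y"
    have "?w $ v = 0" by (simp add: a_def b_def)
    moreover have "?w $ \<sigma> v = \<epsilon> * ?w $ v"
      using arg_cong[OF p1, of "\<lambda>x. x $ v"] arg_cong[OF py, of "\<lambda>x. x $ v"]
      by (simp add: algebra_simps)
    moreover have "?w \<noteq> 0"
    proof (cases "\<phi>1 $ v = 0")
      case True
      then show ?thesis using \<open>\<phi>1 \<noteq> 0\<close> by (simp add: a_def b_def)
    next
      case False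
      then have "?w \<bullet> y \<noteq> 0"
        using \<open>\<phi>1 \<bullet> y = 0\<close> \<open>y \<noteq> 0\<close> by (simp add: a_def b_def inner_diff_left)
      then show ?thesis by auto
    qed
    ultimately show False
      using form[of ?w] eigenvector_combination_form_gt[OF e1 ey \<open>\<phi>1 \<bullet> y = 0\<close> _ \<open>m < l2\<close>]
        \<open>m < l2\<close> \<open>l2 < l1\<close> by force
  qed
  then have "\<epsilon> *\<^sub>R (\<phi>2 + \<epsilon> *\<^sub>R permute_vec \<sigma> \<phi>2) = 0" by (simp add: y_def)
  moreover have "\<epsilon> * \<epsilon> = 1" using \<epsilon> by auto
  ultimately have "permute_vec \<sigma> \<phi>2 + \<epsilon> *\<^sub>R \<phi>2 = 0" by (simp add: scaleR_add_right add.commute)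
  then show ?thesis by (simp add: eq_neg_iff_add_eq_0)
qed

theorem mainTheorem8:
  fixes E :: "'n::finite \<Rightarrow> 'n \<Rightarrow> bool" and \<sigma> :: "'n \<Rightarrow> 'n" and v :: 'n
    and Q l1 l2 :: real and \<phi>1 \<phi>2 :: "real^'n"
  defines "H \<equiv> hamiltonian E \<sigma> v Q"
  assumes "simple_graph E" and "connected_graph E"
    and "graph_involution E \<sigma>" and "\<sigma> v \<noteq> v"
    and "Q > 2 * real (max_degree E)"
    and "H *v \<phi>1 = l1 *\<^sub>R \<phi>1" and "norm \<phi>1 = 1"
    and "H *v \<phi>2 = l2 *\<^sub>R \<phi>2" and "norm \<phi>2 = 1"
    and "l2 < l1"
    and "\<And>x. H *v x = l1 *\<^sub>R x \<Longrightarrow> \<exists>c. x = c *\<^sub>R \<phi>1"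
    and "\<And>\<mu>. is_eigenvalue H \<mu> \<Longrightarrow> \<mu> = l1 \<or> \<mu> \<le> l2"
    and "(\<phi>1 $ v)\<^sup>2 + (\<phi>2 $ v)\<^sup>2 \<ge> 1/2"
  shows "transfer_prob H v (\<sigma> v) (pi / (l1 - l2))
           \<ge> (2 * (\<phi>1 $ v)\<^sup>2 + 2 * (\<phi>2 $ v)\<^sup>2 - 1)\<^sup>2"
proof -
  have sym: "transpose H = H" using hamiltonian_symmetric[OF assms(2)] by (simp add: H_def)
  have inv: "\<And>i. \<sigma> (\<sigma> i) = i" using assms(4) by (simp add: graph_involution_def)
  have comm: "\<And>x. H *v permute_vec \<sigma> x = permute_vec \<sigma> (H *v x)"
    using hamiltonian_permute_vec[OF assms(4)] by (simp add: H_def)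
  have "\<phi>1 \<noteq> 0" using assms(8) by auto
  then obtain \<epsilon> where \<epsilon>: "\<epsilon> = 1 \<or> \<epsilon> = -1" and p1: "permute_vec \<sigma> \<phi>1 = \<epsilon> *\<^sub>R \<phi>1"
    using simple_eigenvector_parity[OF inv comm assms(7) _ assms(12)] by blast
  have l2: "real (max_degree E) < l2"
    using second_eigenvalue_gt_max_degree[OF assms(2-6) p1 \<epsilon> assms(12,13)[unfolded H_def]] .
  have p2: "permute_vec \<sigma> \<phi>2 = (- \<epsilon>) *\<^sub>R \<phi>2"
  proof (rule second_eigenvector_parity[OF sym inv comm _ assms(7) \<open>\<phi>1 \<noteq> 0\<close> p1 \<epsilon> assms(9) l2 assms(11)])
    show "w \<bullet> (H *v w) \<le> real (max_degree E) * (w \<bullet> w)" if "w $ v = 0" "w $ \<sigma> v = 0" for w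
      using hamiltonian_form_le_max_degree[of E w v \<sigma> Q] assms(2) that by (simp add: H_def)
  qed
  have "\<bar>\<epsilon>\<bar> = 1" "\<phi>1 $ \<sigma> v = \<epsilon> * \<phi>1 $ v" "\<phi>2 $ \<sigma> v = - \<epsilon> * \<phi>2 $ v"
    using \<epsilon> arg_cong[OF p1, of "\<lambda>x. x $ v"] arg_cong[OF p2, of "\<lambda>x. x $ v"] by auto
  then have "2 * ((\<phi>1 $ v)\<^sup>2 + (\<phi>2 $ v)\<^sup>2) - 1 \<le> cmod (exp_itH_entry H (pi / (l1 - l2)) v (\<sigma> v))"
    using assms(11) by (intro exp_itH_entry_opposite_parity_bound[OF sym assms(7-10)]) auto
  then show ?thesis
    unfolding transfer_prob_def using assms(14) by (intro power_mono) auto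
qed

end
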